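(* Let $z_1,\ldots,z_N$ be points on the unit circle and $P(z)=\prod_{i=1}^N(z-z_i)$. Then there exists $w\in\mathbb{C}$ with $|w|=1$ such that $|P(w)P(-w)|=1$. *)

theory Defs
  imports "HOL-Analysis.Analysis"
begin

end

theory Submission
  imports Defs "HOL-Computational_Algebra.Polynomial"
begin

(* Since (w - z)(-w - z) = z^2 - w^2, the product P(w)P(-w) equals q(w^2)
   for the polynomial q(u) = \<Prod>i (z_i^2 - u) of degree at most N.  Its constant term
   \<Prod>i z_i^2 has modulus 1, and it vanishes at the unimodular point z_1^2 (if N > 0).
   (1) Averaging a polynomial of degree < M over the M-th roots of unity gives its
       constant term, because the power sums of the roots of unity vanish; hence every
       polynomial takes a value of modulus at least |q(0)| somewhere on the unit circle.
   (2) The unit circle is connected, so by the intermediate value theorem a polynomial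
       with a root on the circle also takes a value of modulus exactly |q(0)| = 1 there.
   A square root w of such a point v has |w| = 1 and |P(w)P(-w)| = |q(v)| = 1. *)

definition unit_root :: "nat \<Rightarrow> nat \<Rightarrow> complex" where
  "unit_root M k = cis (2 * pi * real k / real M)"

lemma sum_unit_root_power:
  assumes "0 < i" "i < M"
  shows "(\<Sum>k<M. unit_root M k ^ i) = 0"
proof -
  define \<omega> where "\<omega> = unit_root M i"
  have bij: "bij_betw (unit_root M) {..<M} {u. u ^ M = 1}"
    unfolding unit_root_def[abs_def] using Complex.bij_betw_roots_unity[of M] assms by simp
  have "\<omega> \<noteq> unit_root M 0"
    using bij assms unfolding \<omega>_def bij_betw_def inj_on_def by fastforce
  hence \<omega>_ne_1: "\<omega> \<noteq> 1" by (simp add: unit_root_def)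
  have \<omega>_root: "\<omega> ^ M = 1"
    using bij assms unfolding \<omega>_def bij_betw_def by auto
  have "(\<Sum>k<M. unit_root M k ^ i) = (\<Sum>k<M. \<omega> ^ k)"
    by (intro sum.cong refl) (simp add: \<omega>_def unit_root_def Complex.DeMoivre mult_ac)
  also have "\<dots> = 0"
    using \<omega>_ne_1 \<omega>_root by (simp add: geometric_sum)
  finally show ?thesis .
qed

lemma sum_poly_unit_root:
  fixes p :: "complex poly"
  assumes "degree p < M"
  shows "(\<Sum>k<M. poly p (unit_root M k)) = of_nat M * poly p 0"
proof -
  have "(\<Sum>k<M. poly p (unit_root M k))
        = (\<Sum>i\<le>degree p. coeff p i * (\<Sum>k<M. unit_root M k ^ i))"
    by (simp add: poly_altdef sum_distrib_left sum.swap[of _ "{..<M}"] mult.commute)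
  also have "\<dots> = (\<Sum>i\<le>degree p. if i = 0 then of_nat M * coeff p 0 else 0)"
    using assms by (intro sum.cong refl) (auto simp: sum_unit_root_power)
  also have "\<dots> = of_nat M * poly p 0"
    by (simp add: poly_0_coeff_0)
  finally show ?thesis .
qed

lemma poly_large_on_unit_circle:
  fixes p :: "complex poly"
  shows "\<exists>u. norm u = 1 \<and> norm (poly p 0) \<le> norm (poly p u)"
proof (rule ccontr)
  define M where "M = Suc (degree p)"
  assume contra: "\<not> ?thesis"
  have deg: "degree p < M" by (simp add: M_def)
  have small: "norm (poly p (unit_root M k)) < norm (poly p 0)" for k
    using contra by (auto simp: unit_root_def not_le)
  have "real M * norm (poly p 0) = norm (\<Sum>k<M. poly p (unit_root M k))"
    by (simp add: sum_poly_unit_root[OF deg] norm_mult)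
  also have "\<dots> \<le> (\<Sum>k<M. norm (poly p (unit_root M k)))"
    by (rule norm_sum)
  also have "\<dots> < (\<Sum>k<M. norm (poly p 0))"
    using deg by (intro sum_strict_mono) (auto simp: small)
  finally show False by simp
qed

lemma ivt_unit_circle:
  fixes f :: "complex \<Rightarrow> real"
  assumes "continuous_on (sphere 0 1) f"
    and "norm u = 1" "norm v = 1" "f u \<le> c" "c \<le> f v"
  shows "\<exists>w. norm w = 1 \<and> f w = c"
proof -
  have "connected (f ` sphere 0 1)"
    using assms(1) connected_sphere[of "0::complex" 1]
    by (intro connected_continuous_image) auto
  moreover have "f u \<in> f ` sphere 0 1" "f v \<in> f ` sphere 0 1"
    using assms(2,3) by auto
  ultimately have "c \<in> f ` sphere 0 1"
    using assms(4,5) by (cases "f u \<le> f v") (auto dest: connectedD_interval)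
  thus ?thesis by auto
qed

lemma poly_norm_at_zero_on_unit_circle:
  fixes p :: "complex poly"
  assumes "norm r = 1" "poly p r = 0"
  shows "\<exists>v. norm v = 1 \<and> norm (poly p v) = norm (poly p 0)"
proof -
  obtain u where "norm u = 1" "norm (poly p 0) \<le> norm (poly p u)"
    using poly_large_on_unit_circle by blast
  moreover have "continuous_on (sphere 0 1) (\<lambda>x. norm (poly p x))"
    by (intro continuous_intros)
  ultimately show ?thesis
    using assms ivt_unit_circle[of "\<lambda>x. norm (poly p x)" r u "norm (poly p 0)"] by auto
qed

definition even_part_poly :: "nat \<Rightarrow> (nat \<Rightarrow> complex) \<Rightarrow> complex poly" where
  "even_part_poly N z = (\<Prod>i=1..N. [:z i ^ 2, -1:])"

lemma poly_even_part_poly: "poly (even_part_poly N z) u = (\<Prod>i=1..N. z i ^ 2 - u)"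
  by (simp add: even_part_poly_def poly_prod)

lemma even_part_poly_square:
  "(\<Prod>i=1..N. (w - z i)) * (\<Prod>i=1..N. (- w - z i)) = poly (even_part_poly N z) (w ^ 2)"
  unfolding poly_even_part_poly prod.distrib[symmetric]
  by (intro prod.cong refl) (simp add: algebra_simps power2_eq_square)

theorem mainTheorem13:
  fixes N :: nat and z :: "nat \<Rightarrow> complex"
  assumes "\<And>i. i \<in> {1..N} \<Longrightarrow> norm (z i) = 1"
  shows "\<exists>w::complex. norm w = 1 \<and>
           norm ((\<Prod>i=1..N. (w - z i)) * (\<Prod>i=1..N. (- w - z i))) = 1"
proof (cases "N = 0")
  case True
  then show ?thesis by (intro exI[of _ 1]) simp
next
  case False
  let ?q = "even_part_poly N z"
  have root: "poly ?q (z 1 ^ 2) = 0" "norm (z 1 ^ 2) = 1"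
    using False assms[of 1] by (auto simp: poly_even_part_poly norm_power)
  have q0: "norm (poly ?q 0) = 1"
    using assms by (simp add: poly_even_part_poly prod_norm[symmetric] norm_power)
  obtain v where v: "norm v = 1" "norm (poly ?q v) = 1"
    using poly_norm_at_zero_on_unit_circle[OF root(2,1)] q0 by auto
  show ?thesis
  proof (intro exI conjI)
    show "norm (csqrt v) = 1" using v by simp
    show "norm ((\<Prod>i=1..N. (csqrt v - z i)) * (\<Prod>i=1..N. (- csqrt v - z i))) = 1"
      unfolding even_part_poly_square using v by simp
  qed
qed

end
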